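(* Let PS1 and PS2 be two pure strategies (as in the context) with $m_{PS1}(X)$ finite for every $X\in\mathcal{S}$. Then PS2 is complementary to PS1 (i.e. there exists $X\in\mathcal{S}_{\mathrm{non}}$ with $\Delta_{PS1}(X)<\Delta_{PS2}(X)$) if and only if there exists a mixed strategy MS derived from PS1 and PS2 whose average expected hitting time is strictly less than that of PS1, i.e. $\bar m_{MS}<\bar m_{PS1}$, where $\bar m=\frac{1}{|\mathcal{S}|}\sum_{X\in\mathcal{S}}m(X)$.
   Context: A fitness function $f$ on a finite set is to be maximised. A metaheuristic generates populations $\Phi_0,\Phi_1,\dots$. Let $\mathcal{S}$ be the finite set of all populations, $\mathcal{S}_{\mathrm{opt}}$ those containing at least one optimal solution, $\mathcal{S}_{\mathrm{non}}=\mathcal{S}\setminus\mathcal{S}_{\mathrm{opt}}$. The sequence is a time-homogeneous Markov chain on $\mathcal{S}$ with transition probabilities $P(X,Y)=\Pr(\Phi_{t+1}=Y\mid\Phi_t=X)$, every state of $\mathcal{S}_{\mathrm{opt}}$ absorbing. The expected hitting time $m(X)\in[0,\infty]$ is the expected number of generations until first entering $\mathcal{S}_{\mathrm{opt}}$ from $\Phi_0=X$ ($m(X)=0$ on $\mathcal{S}_{\mathrm{opt}}$). A pure strategy is such a time-independent transition matrix. PS1, PS2 are pure strategies with transition matrices $P_1,P_2$ on the same $\mathcal{S}$ (with $\mathcal{S}_{\mathrm{opt}}$ absorbing), expected hitting times $m_{PS1},m_{PS2}$. A mixed strategy MS derived from PS1 and PS2 assigns to each $X\in\mathcal{S}$ probabilities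 $P_X(PS1)\in[0,1]$, $P_X(PS2)=1-P_X(PS1)$, and has transition matrix $P_{MS}(X,Y)=P_X(PS1)P_1(X,Y)+P_X(PS2)P_2(X,Y)$, with expected hitting time $m_{MS}$. With $d(X)=m_{PS1}(X)$, for $X\in\mathcal{S}_{\mathrm{non}}$: $\Delta_{PS1}(X)=d(X)-\sum_{Y\in\mathcal{S}_{\mathrm{non}}}P_1(X,Y)d(Y)$, $\Delta_{PS2}(X)=d(X)-\sum_{Y\in\mathcal{S}_{\mathrm{non}}}P_2(X,Y)d(Y)$. *)

theory Defs
  imports "HOL-Analysis.Analysis"
begin

definition pure_strategy :: "'a set \<Rightarrow> 'a set \<Rightarrow> ('a \<Rightarrow> 'a \<Rightarrow> real) \<Rightarrow> bool" where
  "pure_strategy S Sopt P \<longleftrightarrow>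
     (\<forall>X\<in>S. \<forall>Y\<in>S. 0 \<le> P X Y) \<and>
     (\<forall>X\<in>S. (\<Sum>Y\<in>S. P X Y) = 1) \<and>
     (\<forall>X\<in>Sopt. P X X = 1)"

text \<open>not_hit S Sopt P t X = Pr(Phi_0,...,Phi_t all lie outside Sopt | Phi_0 = X),
  i.e. the probability that the hitting time exceeds t.\<close>
fun not_hit :: "'a set \<Rightarrow> 'a set \<Rightarrow> ('a \<Rightarrow> 'a \<Rightarrow> real) \<Rightarrow> nat \<Rightarrow> 'a \<Rightarrow> real" where
  "not_hit S Sopt P 0 X = (if X \<in> Sopt then 0 else 1)"
| "not_hit S Sopt P (Suc t) X =
     (if X \<in> Sopt then 0 else (\<Sum>Y\<in>S. P X Y * not_hit S Sopt P t Y))"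

text \<open>Expected hitting time E[T] = sum_{t>=0} Pr(T > t), valued in [0,\<infinity>].\<close>
definition hit_time :: "'a set \<Rightarrow> 'a set \<Rightarrow> ('a \<Rightarrow> 'a \<Rightarrow> real) \<Rightarrow> 'a \<Rightarrow> ennreal" where
  "hit_time S Sopt P X = (\<Sum>t. ennreal (not_hit S Sopt P t X))"

definition avg_hit_time :: "'a set \<Rightarrow> 'a set \<Rightarrow> ('a \<Rightarrow> 'a \<Rightarrow> real) \<Rightarrow> ennreal" where
  "avg_hit_time S Sopt P = (\<Sum>X\<in>S. hit_time S Sopt P X) / of_nat (card S)"

definition mixed :: "('a \<Rightarrow> real) \<Rightarrow> ('a \<Rightarrow> 'a \<Rightarrow> real) \<Rightarrow> ('a \<Rightarrow> 'a \<Rightarrow> real) \<Rightarrow> 'a \<Rightarrow> 'a \<Rightarrow> real" where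
  "mixed q P1 P2 X Y = q X * P1 X Y + (1 - q X) * P2 X Y"

definition Delta :: "'a set \<Rightarrow> 'a set \<Rightarrow> ('a \<Rightarrow> real) \<Rightarrow> ('a \<Rightarrow> 'a \<Rightarrow> real) \<Rightarrow> 'a \<Rightarrow> real" where
  "Delta S Sopt d P X = d X - (\<Sum>Y\<in>S - Sopt. P X Y * d Y)"

definition complementary :: "'a set \<Rightarrow> 'a set \<Rightarrow> ('a \<Rightarrow> 'a \<Rightarrow> real) \<Rightarrow> ('a \<Rightarrow> 'a \<Rightarrow> real) \<Rightarrow> bool" where
  "complementary S Sopt P1 P2 \<longleftrightarrow>
     (let d = (\<lambda>X. enn2real (hit_time S Sopt P1 X)) in
      \<exists>X\<in>S - Sopt. Delta S Sopt d P1 X < Delta S Sopt d P2 X)"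

end

theory Submission
  imports Defs
begin

text \<open>Let \<open>d = m\<^sub>P\<^sub>S\<^sub>1\<close>. Off \<open>Sopt\<close> it solves the Poisson equation
  \<open>d X = 1 + (\<Sum>Y. P\<^sub>1 X Y * d Y)\<close>, so \<open>\<Delta>\<^sub>P\<^sub>S\<^sub>1 = 1\<close> there and PS2 is complementary
  exactly when one step of PS2 from some \<open>X\<close>, followed by PS1, beats \<open>d X\<close>.
  Supersolutions of the Poisson equation of a strategy bound its hitting times from above,
  subsolutions vanishing on \<open>Sopt\<close> bound them from below. If \<open>X\<^sub>0\<close> witnesses
  complementarity, \<open>d\<close> lowered at \<open>X\<^sub>0\<close> is a supersolution for the strategy that uses
  PS2 only at \<open>X\<^sub>0\<close>, which therefore beats PS1 on average. Otherwise \<open>d\<close> is a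
  subsolution for every mixed strategy, so none of them beats PS1 anywhere.\<close>

lemma not_hit_optimal [simp]: "X \<in> Sopt \<Longrightarrow> not_hit S Sopt P t X = 0"
  by (cases t) auto

lemma hit_time_optimal: "X \<in> Sopt \<Longrightarrow> hit_time S Sopt P X = 0"
  by (simp add: hit_time_def)

lemma not_hit_nonneg:
  assumes "\<forall>X\<in>S. \<forall>Y\<in>S. 0 \<le> P X Y" and "X \<in> S"
  shows "0 \<le> not_hit S Sopt P t X"
  using assms(2)
proof (induction t arbitrary: X)
  case (Suc t)
  then show ?case using assms(1) by (auto intro!: sum_nonneg)
qed simp

lemma sum_not_hit_Suc:
  assumes "X \<notin> Sopt"
  shows "(\<Sum>t<Suc n. not_hit S Sopt P t X) = 1 + (\<Sum>Y\<in>S. P X Y * (\<Sum>t<n. not_hit S Sopt P t Y))"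
proof -
  have "(\<Sum>t<Suc n. not_hit S Sopt P t X) = not_hit S Sopt P 0 X + (\<Sum>t<n. not_hit S Sopt P (Suc t) X)"
    by (rule sum.lessThan_Suc_shift)
  also have "\<dots> = 1 + (\<Sum>t<n. \<Sum>Y\<in>S. P X Y * not_hit S Sopt P t Y)"
    using assms by simp
  also have "\<dots> = 1 + (\<Sum>Y\<in>S. P X Y * (\<Sum>t<n. not_hit S Sopt P t Y))"
    by (simp add: sum.swap[of _ "{..<n}"] sum_distrib_left)
  finally show ?thesis .
qed

lemma hit_time_eq_suminf:
  assumes "\<forall>X\<in>S. \<forall>Y\<in>S. 0 \<le> P X Y" and "X \<in> S" and "summable (\<lambda>t. not_hit S Sopt P t X)"
  shows "hit_time S Sopt P X = ennreal (\<Sum>t. not_hit S Sopt P t X)"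
  unfolding hit_time_def by (rule suminf_ennreal2[OF not_hit_nonneg[OF assms(1,2)] assms(3)])

lemma summable_not_hit:
  assumes "\<forall>X\<in>S. \<forall>Y\<in>S. 0 \<le> P X Y" and "X \<in> S" and "hit_time S Sopt P X < \<infinity>"
  shows "summable (\<lambda>t. not_hit S Sopt P t X)"
  using assms(3) unfolding hit_time_def
  by (intro summable_suminf_not_top not_hit_nonneg[OF assms(1,2)]) auto

lemma sum_not_hit_le_supersolution:
  assumes nonneg: "\<forall>X\<in>S. \<forall>Y\<in>S. 0 \<le> P X Y"
    and e_nonneg: "\<forall>X\<in>S. 0 \<le> e X"
    and super: "\<forall>X\<in>S - Sopt. 1 + (\<Sum>Y\<in>S. P X Y * e Y) \<le> e X"
    and "X \<in> S"
  shows "(\<Sum>t<n. not_hit S Sopt P t X) \<le> e X"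
  using \<open>X \<in> S\<close>
proof (induction n arbitrary: X)
  case 0
  then show ?case using e_nonneg by simp
next
  case (Suc n)
  show ?case
  proof (cases "X \<in> Sopt")
    case True
    then show ?thesis using e_nonneg Suc.prems by simp
  next
    case False
    have "(\<Sum>t<Suc n. not_hit S Sopt P t X) = 1 + (\<Sum>Y\<in>S. P X Y * (\<Sum>t<n. not_hit S Sopt P t Y))"
      by (rule sum_not_hit_Suc[OF False])
    also have "\<dots> \<le> 1 + (\<Sum>Y\<in>S. P X Y * e Y)"
      using Suc nonneg by (auto intro!: sum_mono mult_left_mono)
    also have "\<dots> \<le> e X"
      using super Suc.prems False by auto
    finally show ?thesis .
  qed
qed

lemma hit_time_le_supersolution:
  assumes "\<forall>X\<in>S. \<forall>Y\<in>S. 0 \<le> P X Y"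
    and "\<forall>X\<in>S. 0 \<le> e X"
    and "\<forall>X\<in>S - Sopt. 1 + (\<Sum>Y\<in>S. P X Y * e Y) \<le> e X"
    and "X \<in> S"
  shows "hit_time S Sopt P X \<le> ennreal (e X)"
proof -
  have "(\<Sum>t<n. ennreal (not_hit S Sopt P t X)) \<le> ennreal (e X)" for n
    using sum_not_hit_le_supersolution[OF assms] not_hit_nonneg[OF assms(1,4)]
    by (simp add: ennreal_leI)
  then show ?thesis
    unfolding hit_time_def suminf_eq_SUP by (rule SUP_least)
qed

lemma subsolution_le_sum_not_hit:
  assumes nonneg: "\<forall>X\<in>S. \<forall>Y\<in>S. 0 \<le> P X Y"
    and e_bound: "\<forall>X\<in>S. e X \<le> M" and e_optimal: "\<forall>X\<in>Sopt. e X = 0"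
    and sub: "\<forall>X\<in>S - Sopt. e X \<le> 1 + (\<Sum>Y\<in>S. P X Y * e Y)"
    and "X \<in> S"
  shows "e X \<le> (\<Sum>t<n. not_hit S Sopt P t X) + M * not_hit S Sopt P n X"
  using \<open>X \<in> S\<close>
proof (induction n arbitrary: X)
  case 0
  then show ?case using e_bound e_optimal by auto
next
  case (Suc n)
  show ?case
  proof (cases "X \<in> Sopt")
    case True
    then show ?thesis using e_optimal by simp
  next
    case False
    have "e X \<le> 1 + (\<Sum>Y\<in>S. P X Y * e Y)"
      using sub Suc.prems False by auto
    also have "\<dots> \<le> 1 + (\<Sum>Y\<in>S. P X Y * ((\<Sum>t<n. not_hit S Sopt P t Y) + M * not_hit S Sopt P n Y))"
      using Suc nonneg by (auto intro!: sum_mono mult_left_mono)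
    also have "\<dots> = (\<Sum>t<Suc n. not_hit S Sopt P t X) + M * not_hit S Sopt P (Suc n) X"
      using sum_not_hit_Suc[OF False, of S P n] False
      by (simp add: distrib_left sum.distrib sum_distrib_left algebra_simps)
    finally show ?thesis .
  qed
qed

lemma subsolution_le_hit_time:
  assumes "finite S" and nonneg: "\<forall>X\<in>S. \<forall>Y\<in>S. 0 \<le> P X Y"
    and e_optimal: "\<forall>X\<in>Sopt. e X = 0"
    and sub: "\<forall>X\<in>S - Sopt. e X \<le> 1 + (\<Sum>Y\<in>S. P X Y * e Y)"
    and X: "X \<in> S"
  shows "ennreal (e X) \<le> hit_time S Sopt P X"
proof (cases "hit_time S Sopt P X < \<infinity>")
  case True
  let ?M = "Max (e ` S)"
  have summable: "summable (\<lambda>t. not_hit S Sopt P t X)"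
    by (rule summable_not_hit[OF nonneg X True])
  have "(\<lambda>n. (\<Sum>t<n. not_hit S Sopt P t X) + ?M * not_hit S Sopt P n X)
      \<longlonglongrightarrow> (\<Sum>t. not_hit S Sopt P t X) + ?M * 0"
    by (intro tendsto_intros summable_LIMSEQ summable_LIMSEQ_zero summable)
  moreover have "e X \<le> (\<Sum>t<n. not_hit S Sopt P t X) + ?M * not_hit S Sopt P n X" for n
    using subsolution_le_sum_not_hit[OF nonneg _ e_optimal sub X] \<open>finite S\<close> by simp
  ultimately have "e X \<le> (\<Sum>t. not_hit S Sopt P t X)"
    by (simp add: LIMSEQ_le_const)
  then show ?thesis
    using hit_time_eq_suminf[OF nonneg X summable] by (simp add: ennreal_leI)
qed (simp add: less_top[symmetric])

lemma enn2real_hit_time_eq: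
  assumes "finite S" and nonneg: "\<forall>X\<in>S. \<forall>Y\<in>S. 0 \<le> P X Y"
    and finite_time: "\<forall>X\<in>S. hit_time S Sopt P X < \<infinity>" and X: "X \<in> S - Sopt"
  shows "enn2real (hit_time S Sopt P X) = 1 + (\<Sum>Y\<in>S. P X Y * enn2real (hit_time S Sopt P Y))"
proof -
  let ?f = "\<lambda>Y t. not_hit S Sopt P t Y"
  have summable: "summable (?f Y)" if "Y \<in> S" for Y
    using summable_not_hit[OF nonneg that] finite_time that by blast
  have d: "enn2real (hit_time S Sopt P Y) = suminf (?f Y)" if "Y \<in> S" for Y
    using hit_time_eq_suminf[OF nonneg that summable[OF that]]
      not_hit_nonneg[OF nonneg that] summable[OF that] by (simp add: suminf_nonneg)
  have "suminf (?f X) = ?f X 0 + (\<Sum>t. ?f X (Suc t))"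
    using suminf_split_head[OF summable[of X]] X by simp
  also have "(\<Sum>t. ?f X (Suc t)) = (\<Sum>t. \<Sum>Y\<in>S. P X Y * ?f Y t)"
    using X by simp
  also have "\<dots> = (\<Sum>Y\<in>S. \<Sum>t. P X Y * ?f Y t)"
    by (rule suminf_sum) (auto intro!: summable_mult summable)
  also have "\<dots> = (\<Sum>Y\<in>S. P X Y * enn2real (hit_time S Sopt P Y))"
    by (rule sum.cong) (auto simp: d intro!: suminf_mult summable)
  finally show ?thesis
    using X d by simp
qed

lemma complementary_iff:
  assumes "finite S" and "\<forall>X\<in>S. \<forall>Y\<in>S. 0 \<le> P1 X Y"
    and "\<forall>X\<in>S. hit_time S Sopt P1 X < \<infinity>"
  shows "complementary S Sopt P1 P2 \<longleftrightarrow>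
    (\<exists>X\<in>S - Sopt. 1 + (\<Sum>Y\<in>S. P2 X Y * enn2real (hit_time S Sopt P1 Y))
                     < enn2real (hit_time S Sopt P1 X))"
proof -
  define d where "d X = enn2real (hit_time S Sopt P1 X)" for X
  have Delta_eq: "Delta S Sopt d P X = d X - (\<Sum>Y\<in>S. P X Y * d Y)" for P X
    unfolding Delta_def d_def using \<open>finite S\<close>
    by (intro arg_cong[where f = "(-) _"] sum.mono_neutral_left) (auto simp: hit_time_optimal)
  have "Delta S Sopt d P1 X < Delta S Sopt d P2 X \<longleftrightarrow> 1 + (\<Sum>Y\<in>S. P2 X Y * d Y) < d X"
    if "X \<in> S - Sopt" for X
    using enn2real_hit_time_eq[OF assms that] by (simp add: Delta_eq d_def)
  then show ?thesis
    unfolding complementary_def Let_def d_def[symmetric] by blast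
qed

lemma mixed_nonneg:
  assumes "\<forall>X\<in>S. \<forall>Y\<in>S. 0 \<le> P1 X Y" and "\<forall>X\<in>S. \<forall>Y\<in>S. 0 \<le> P2 X Y"
    and "\<forall>X\<in>S. 0 \<le> q X \<and> q X \<le> 1"
  shows "\<forall>X\<in>S. \<forall>Y\<in>S. 0 \<le> mixed q P1 P2 X Y"
  using assms unfolding mixed_def by auto

lemma divide_strict_right_mono_ennreal:
  fixes a b c :: ennreal
  assumes "a < b" and "0 < c" and "c < \<infinity>"
  shows "a / c < b / c"
  unfolding divide_ennreal_def using assms
  by (intro ennreal_mult_strict_right_mono) (auto simp: ennreal_inverse_positive less_top[symmetric])

lemma avg_hit_time_switch_less:
  assumes "finite S" and nonneg1: "\<forall>X\<in>S. \<forall>Y\<in>S. 0 \<le> P1 X Y"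
    and nonneg2: "\<forall>X\<in>S. \<forall>Y\<in>S. 0 \<le> P2 X Y"
    and finite_time: "\<forall>X\<in>S. hit_time S Sopt P1 X < \<infinity>"
    and X0: "X0 \<in> S - Sopt"
    and better: "1 + (\<Sum>Y\<in>S. P2 X0 Y * enn2real (hit_time S Sopt P1 Y))
                  < enn2real (hit_time S Sopt P1 X0)"
  shows "avg_hit_time S Sopt (mixed (\<lambda>X. if X = X0 then 0 else 1) P1 P2) < avg_hit_time S Sopt P1"
proof -
  define d where "d X = enn2real (hit_time S Sopt P1 X)" for X
  define P where "P = mixed (\<lambda>X. if X = X0 then 0 else 1) P1 P2"
  define e where "e = d(X0 := 1 + (\<Sum>Y\<in>S. P2 X0 Y * d Y))"
  have P: "P X Y = (if X = X0 then P2 X Y else P1 X Y)" for X Y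
    unfolding P_def mixed_def by simp
  have e_le_d: "e X \<le> d X" for X
    using better unfolding e_def d_def by auto
  have e_nonneg: "\<forall>X\<in>S. 0 \<le> e X"
    using nonneg2 by (auto simp: e_def d_def intro!: add_nonneg_nonneg sum_nonneg)
  have "1 + (\<Sum>Y\<in>S. P X Y * e Y) \<le> e X" if X: "X \<in> S - Sopt" for X
  proof -
    have "(\<Sum>Y\<in>S. P X Y * e Y) \<le> (\<Sum>Y\<in>S. P X Y * d Y)"
      using X nonneg1 nonneg2 e_le_d by (auto simp: P intro!: sum_mono mult_left_mono)
    then show ?thesis
      using enn2real_hit_time_eq[OF \<open>finite S\<close> nonneg1 finite_time X]
      by (auto simp: e_def d_def P)
  qed
  then have "hit_time S Sopt P X \<le> ennreal (e X)" if "X \<in> S" for X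
    using hit_time_le_supersolution[OF _ e_nonneg] that nonneg1 nonneg2
    by (simp add: P_def mixed_nonneg)
  then have "(\<Sum>X\<in>S. hit_time S Sopt P X) \<le> ennreal (sum e S)"
    using sum_mono[of S "hit_time S Sopt P" "\<lambda>X. ennreal (e X)"] e_nonneg by simp
  also have "\<dots> < ennreal (sum d S)"
  proof (rule ennreal_lessI)
    have "sum e S < sum d S"
      using X0 better e_le_d by (intro sum_strict_mono_ex1[OF \<open>finite S\<close>]) (auto simp: e_def d_def)
    moreover have "0 \<le> sum e S"
      using e_nonneg by (simp add: sum_nonneg)
    ultimately show "0 < sum d S" "sum e S < sum d S"
      by linarith+
  qed
  also have "\<dots> = (\<Sum>X\<in>S. ennreal (d X))"
    by (simp add: d_def)
  also have "\<dots> = (\<Sum>X\<in>S. hit_time S Sopt P1 X)"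
    using finite_time by (simp add: d_def)
  finally show ?thesis
    unfolding avg_hit_time_def P_def[symmetric] using X0 \<open>finite S\<close>
    by (intro divide_strict_right_mono_ennreal) (auto simp: card_gt_0_iff of_nat_less_top)
qed

lemma avg_hit_time_le_mixed:
  assumes "finite S" and nonneg1: "\<forall>X\<in>S. \<forall>Y\<in>S. 0 \<le> P1 X Y"
    and nonneg2: "\<forall>X\<in>S. \<forall>Y\<in>S. 0 \<le> P2 X Y"
    and finite_time: "\<forall>X\<in>S. hit_time S Sopt P1 X < \<infinity>"
    and q: "\<forall>X\<in>S. 0 \<le> q X \<and> q X \<le> 1"
    and not_better: "\<forall>X\<in>S - Sopt. enn2real (hit_time S Sopt P1 X)
                  \<le> 1 + (\<Sum>Y\<in>S. P2 X Y * enn2real (hit_time S Sopt P1 Y))"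
  shows "avg_hit_time S Sopt P1 \<le> avg_hit_time S Sopt (mixed q P1 P2)"
proof -
  define d where "d X = enn2real (hit_time S Sopt P1 X)" for X
  have sub: "\<forall>X\<in>S - Sopt. d X \<le> 1 + (\<Sum>Y\<in>S. mixed q P1 P2 X Y * d Y)"
  proof
    fix X assume X: "X \<in> S - Sopt"
    have "d X = 1 + (\<Sum>Y\<in>S. P1 X Y * d Y)"
      using enn2real_hit_time_eq[OF \<open>finite S\<close> nonneg1 finite_time X] by (simp add: d_def)
    moreover have "d X \<le> 1 + (\<Sum>Y\<in>S. P2 X Y * d Y)"
      using not_better X by (simp add: d_def)
    ultimately have "q X * d X + (1 - q X) * d X
        \<le> q X * (1 + (\<Sum>Y\<in>S. P1 X Y * d Y)) + (1 - q X) * (1 + (\<Sum>Y\<in>S. P2 X Y * d Y))"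
      using q X by (intro add_mono mult_left_mono) auto
    then have "d X \<le> q X * (1 + (\<Sum>Y\<in>S. P1 X Y * d Y)) + (1 - q X) * (1 + (\<Sum>Y\<in>S. P2 X Y * d Y))"
      by (simp add: algebra_simps)
    also have "\<dots> = 1 + (\<Sum>Y\<in>S. mixed q P1 P2 X Y * d Y)"
      unfolding mixed_def by (simp add: sum.distrib sum_distrib_left sum_subtractf algebra_simps)
    finally show "d X \<le> 1 + (\<Sum>Y\<in>S. mixed q P1 P2 X Y * d Y)" .
  qed
  moreover have "\<forall>X\<in>Sopt. d X = 0"
    by (simp add: d_def hit_time_optimal)
  ultimately have "ennreal (d X) \<le> hit_time S Sopt (mixed q P1 P2) X" if "X \<in> S" for X
    using subsolution_le_hit_time[OF \<open>finite S\<close> mixed_nonneg[OF nonneg1 nonneg2 q]] that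
    by blast
  then have "hit_time S Sopt P1 X \<le> hit_time S Sopt (mixed q P1 P2) X" if "X \<in> S" for X
    using finite_time that by (simp add: d_def)
  then show ?thesis
    unfolding avg_hit_time_def by (intro divide_right_mono_ennreal sum_mono)
qed

theorem corollary6:
  fixes S Sopt :: "'a set" and P1 P2 :: "'a \<Rightarrow> 'a \<Rightarrow> real"
  assumes "finite S" and "Sopt \<subseteq> S"
    and "pure_strategy S Sopt P1" and "pure_strategy S Sopt P2"
    and "\<forall>X\<in>S. hit_time S Sopt P1 X < \<infinity>"
  shows "complementary S Sopt P1 P2 \<longleftrightarrow>
    (\<exists>q :: 'a \<Rightarrow> real. (\<forall>X\<in>S. 0 \<le> q X \<and> q X \<le> 1) \<and>
       avg_hit_time S Sopt (mixed q P1 P2) < avg_hit_time S Sopt P1)"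
proof -
  have nonneg1: "\<forall>X\<in>S. \<forall>Y\<in>S. 0 \<le> P1 X Y" and nonneg2: "\<forall>X\<in>S. \<forall>Y\<in>S. 0 \<le> P2 X Y"
    using assms(3,4) unfolding pure_strategy_def by auto
  note complementary = complementary_iff[OF assms(1) nonneg1 assms(5)]
  show ?thesis
  proof
    assume "complementary S Sopt P1 P2"
    then obtain X0 where "X0 \<in> S - Sopt"
      "1 + (\<Sum>Y\<in>S. P2 X0 Y * enn2real (hit_time S Sopt P1 Y)) < enn2real (hit_time S Sopt P1 X0)"
      unfolding complementary by blast
    from avg_hit_time_switch_less[OF assms(1) nonneg1 nonneg2 assms(5) this]
    show "\<exists>q. (\<forall>X\<in>S. 0 \<le> q X \<and> q X \<le> 1) \<and>
       avg_hit_time S Sopt (mixed q P1 P2) < avg_hit_time S Sopt P1"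
      by (intro exI[of _ "\<lambda>X. if X = X0 then 0 else 1"]) auto
  next
    assume "\<exists>q. (\<forall>X\<in>S. 0 \<le> q X \<and> q X \<le> 1) \<and>
       avg_hit_time S Sopt (mixed q P1 P2) < avg_hit_time S Sopt P1"
    then show "complementary S Sopt P1 P2"
      using avg_hit_time_le_mixed[OF assms(1) nonneg1 nonneg2 assms(5)]
      unfolding complementary by (force simp: not_less)
  qed
qed

end
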